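(* In the simplified model with conditional inclusion lists, regardless of the payment rule, if $B_1>f_{BP}$, then there is a Nash equilibrium in which every includer omits $t_0$ from its inclusion list and the block producer omits $t_0$ from the block.
   Context: Simplified model (single slot, complete information, Nash equilibrium). Players: a block producer and $m$ includers with distinct orders $1,\dots,m$. A mempool $M$ of $w$ user transactions, each of size $s>0$; $t_0\in M$ is a target transaction. Each inclusion list holds at most $c_{Incl}$ transactions and the block at most $c_{block}$. Each includer chooses an inclusion list consisting of transactions from $M$ and/or fake transactions it creates; then the block producer, seeing all lists, chooses a block consisting of transactions from $M$ and/or fake transactions it creates. No party may add transactions to the mempool. Every transaction in an approved block pays burning fee $r\cdot s$ ($r\ge0$); for fake transactions this is paid by their creator. Processing costs are zero. Conditional inclusion lists: the attesters reject the block iff some transaction appearing in an inclusion list is missing from the block while the block contains fewer than $c_{block}$ transactions. If the block is rejected, the block producer and includers receive no fees. Payments: if $t_0$ is in an approved block, the block producer receives $f_{BP}\ge0$ from $t_0$ (whether or not $t_0$ is in a list); the includers collectively receive at most $f_{CM}\ge0$ from $t_0$, and only if $t_0$ is in some inclusion list and in the approved block. An external briber pays the block producer $B_1$ if $t_0$ is not in its block, and pays includer $j$ the amount $B^j\ge0$ if $t_0$ is not in its inclusion list. Each player's utility is fees received plus bribes received minus burning fees paid for its own fake transactions in an approved block. *)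

theory Defs
  imports Main "HOL.Real"
begin

text \<open>Players: the block producer BP and includers Inc j (j = 1..m, j is the includer's order).\<close>
datatype player = BP | Inc nat

text \<open>Transactions: a user transaction from the mempool (type 'a), or a fake transaction
  created by a player (unboundedly many, indexed by nat).\<close>
datatype 'a tx = Mem 'a | Fake player nat

definition valid_list :: "'a set \<Rightarrow> nat \<Rightarrow> nat \<Rightarrow> 'a tx set \<Rightarrow> bool" where
  "valid_list M cIncl j L \<longleftrightarrow> finite L \<and> card L \<le> cIncl \<and>
     (\<forall>x\<in>L. case x of Mem t \<Rightarrow> t \<in> M | Fake p k \<Rightarrow> p = Inc j)"

definition valid_block :: "'a set \<Rightarrow> nat \<Rightarrow> 'a tx set \<Rightarrow> bool" where
  "valid_block M cblock b \<longleftrightarrow> finite b \<and> card b \<le> cblock \<and>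
     (\<forall>x\<in>b. case x of Mem t \<Rightarrow> t \<in> M | Fake p k \<Rightarrow> p = BP)"

definition approved :: "nat \<Rightarrow> nat \<Rightarrow> (nat \<Rightarrow> 'a tx set) \<Rightarrow> 'a tx set \<Rightarrow> bool" where
  "approved m cblock L b \<longleftrightarrow>
     \<not> ((\<exists>j\<in>{1..m}. \<exists>x\<in>L j. x \<notin> b) \<and> card b < cblock)"

definition burn :: "real \<Rightarrow> real \<Rightarrow> player \<Rightarrow> 'a tx set \<Rightarrow> real" where
  "burn r s p b = r * s * real (card {k. Fake p k \<in> b})"

definition u_BP :: "nat \<Rightarrow> nat \<Rightarrow> real \<Rightarrow> real \<Rightarrow> real \<Rightarrow> real \<Rightarrow> 'a
    \<Rightarrow> (nat \<Rightarrow> 'a tx set) \<Rightarrow> 'a tx set \<Rightarrow> real" where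
  "u_BP m cblock r s fBP B1 t0 L b =
     (if approved m cblock L b
      then (if Mem t0 \<in> b then fBP else 0) - burn r s BP b else 0)
     + (if Mem t0 \<notin> b then B1 else 0)"

text \<open>Utility of includer j. The payment rule pay gives includer j's share of the
  includers' fee from t0; it is only paid if t0 is in some list and in the approved block.\<close>
definition u_Inc :: "nat \<Rightarrow> nat \<Rightarrow> real \<Rightarrow> real \<Rightarrow> (nat \<Rightarrow> real) \<Rightarrow> 'a
    \<Rightarrow> ((nat \<Rightarrow> 'a tx set) \<Rightarrow> 'a tx set \<Rightarrow> nat \<Rightarrow> real)
    \<Rightarrow> nat \<Rightarrow> (nat \<Rightarrow> 'a tx set) \<Rightarrow> 'a tx set \<Rightarrow> real" where
  "u_Inc m cblock r s Bj t0 pay j L b =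
     (if approved m cblock L b \<and> Mem t0 \<in> b \<and> (\<exists>i\<in>{1..m}. Mem t0 \<in> L i)
      then pay L b j else 0)
     + (if Mem t0 \<notin> L j then Bj j else 0)
     - (if approved m cblock L b then burn r s (Inc j) b else 0)"

definition payment_rule :: "nat \<Rightarrow> real \<Rightarrow> ((nat \<Rightarrow> 'a tx set) \<Rightarrow> 'a tx set \<Rightarrow> nat \<Rightarrow> real) \<Rightarrow> bool" where
  "payment_rule m fCM pay \<longleftrightarrow>
     (\<forall>L b j. 0 \<le> pay L b j) \<and> (\<forall>L b. (\<Sum>j\<in>{1..m}. pay L b j) \<le> fCM)"

text \<open>Nash equilibrium of the two-stage game: includers' lists L (for j = 1..m) and the block
  producer's strategy sigma mapping every list profile to a block.\<close>
definition nash_eq :: "'a set \<Rightarrow> nat \<Rightarrow> nat \<Rightarrow> nat \<Rightarrow> real \<Rightarrow> real \<Rightarrow> real \<Rightarrow> real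
    \<Rightarrow> (nat \<Rightarrow> real) \<Rightarrow> 'a \<Rightarrow> ((nat \<Rightarrow> 'a tx set) \<Rightarrow> 'a tx set \<Rightarrow> nat \<Rightarrow> real)
    \<Rightarrow> (nat \<Rightarrow> 'a tx set) \<Rightarrow> ((nat \<Rightarrow> 'a tx set) \<Rightarrow> 'a tx set) \<Rightarrow> bool" where
  "nash_eq M m cIncl cblock r s fBP B1 Bj t0 pay L \<sigma> \<longleftrightarrow>
     (\<forall>j\<in>{1..m}. valid_list M cIncl j (L j)) \<and>
     (\<forall>L'. valid_block M cblock (\<sigma> L')) \<and>
     (\<forall>b. valid_block M cblock b \<longrightarrow>
        u_BP m cblock r s fBP B1 t0 L b \<le> u_BP m cblock r s fBP B1 t0 L (\<sigma> L)) \<and>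
     (\<forall>j\<in>{1..m}. \<forall>Lj. valid_list M cIncl j Lj \<longrightarrow>
        u_Inc m cblock r s Bj t0 pay j (L(j := Lj)) (\<sigma> (L(j := Lj)))
          \<le> u_Inc m cblock r s Bj t0 pay j L (\<sigma> L))"

end

theory Submission
  imports Defs
begin

text \<open>Let every includer submit the empty list and let the block producer answer every list
  profile with the empty block. The empty lists impose no condition, so the empty block is
  approved and earns the bribe \<open>B\<^sub>1\<close>; any other block earns at most \<open>max f\<^sub>B\<^sub>P 0\<close> if it contains
  \<open>t\<^sub>0\<close> and at most \<open>B\<^sub>1\<close> minus burning fees otherwise. An includer facing the empty block never
  collects a fee, so listing \<open>t\<^sub>0\<close> can only cost it its bribe.\<close>

lemma burn_empty [simp]: "burn r s p {} = 0"
  by (simp add: burn_def)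

lemma burn_nonneg: "0 \<le> r \<Longrightarrow> 0 \<le> s \<Longrightarrow> 0 \<le> burn r s p b"
  by (simp add: burn_def)

lemma approved_empty_lists [simp]: "approved m cblock (\<lambda>_. {}) b"
  by (simp add: approved_def)

lemma valid_list_empty [simp]: "valid_list M cIncl j {}"
  by (simp add: valid_list_def)

lemma valid_block_empty [simp]: "valid_block M cblock {}"
  by (simp add: valid_block_def)

lemma u_BP_le_bribe:
  assumes "0 \<le> r" and "0 \<le> s" and "fBP \<le> B1" and "0 \<le> B1"
  shows "u_BP m cblock r s fBP B1 t0 L b \<le> B1"
  using burn_nonneg[OF assms(1,2), of BP b] assms(3,4) by (simp add: u_BP_def)

lemma u_BP_empty_lists_empty_block: "u_BP m cblock r s fBP B1 t0 (\<lambda>_. {}) {} = B1"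
  by (simp add: u_BP_def)

lemma u_Inc_empty_block:
  "u_Inc m cblock r s Bj t0 pay j L {} = (if Mem t0 \<in> L j then 0 else Bj j)"
  by (simp add: u_Inc_def)

lemma nash_eq_empty_lists_empty_block:
  assumes "0 \<le> r" and "0 \<le> s" and "fBP \<le> B1" and "0 \<le> B1"
    and "\<forall>j\<in>{1..m}. 0 \<le> Bj j"
  shows "nash_eq M m cIncl cblock r s fBP B1 Bj t0 pay (\<lambda>_. {}) (\<lambda>_. {})"
  unfolding nash_eq_def
  using assms(5)
  by (simp add: u_BP_le_bribe[OF assms(1-4)] u_BP_empty_lists_empty_block u_Inc_empty_block)

theorem mainTheorem7:
  fixes M :: "'a set" and t0 :: 'a and m w cIncl cblock :: nat
    and s r fBP fCM B1 :: real and Bj :: "nat \<Rightarrow> real"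
    and pay :: "(nat \<Rightarrow> 'a tx set) \<Rightarrow> 'a tx set \<Rightarrow> nat \<Rightarrow> real"
  assumes "finite M" and "card M = w" and "t0 \<in> M"
    and "s > 0" and "r \<ge> 0" and "fBP \<ge> 0" and "fCM \<ge> 0"
    and "\<forall>j\<in>{1..m}. Bj j \<ge> 0"
    and "payment_rule m fCM pay"
    and "B1 > fBP"
  shows "\<exists>L \<sigma>. nash_eq M m cIncl cblock r s fBP B1 Bj t0 pay L \<sigma> \<and>
           (\<forall>j\<in>{1..m}. Mem t0 \<notin> L j) \<and> Mem t0 \<notin> \<sigma> L"
proof -
  have "nash_eq M m cIncl cblock r s fBP B1 Bj t0 pay (\<lambda>_. {}) (\<lambda>_. {})"
    using assms(4-6,8,10) by (intro nash_eq_empty_lists_empty_block) auto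
  then show ?thesis by blast
qed

end
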